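(* Let $d\in\mathbb{N}$, and let $x,y\in\mathbb{R}^d$. The sets $\Pi$, $\Pi^{y}$ and $\Phi(x)$ are coanalytic, and hence Lebesgue measurable.
   Context: For $z\in\mathbb{R}^d$, $\|z\|$ denotes the sup-norm distance from $z$ to $\mathbb{Z}^d$. Write $\mathbb{N}=\{1,2,\dots\}$. For $\psi:\mathbb{N}\to\mathbb{R}_{\ge 0}$, let $W(\psi)$ be the set of pairs $(x,y)\in\mathbb{R}^d\times\mathbb{R}^d$ for which $\|nx+y\|<\psi(n)$ holds for infinitely many $n\in\mathbb{N}$. $\mathcal{D}$ is the set of all non-increasing $\psi:\mathbb{N}\to\mathbb{R}_{\ge0}$ with $\sum_n\psi(n)^d=\infty$, and $\Pi=\bigcap_{\psi\in\mathcal{D}}W(\psi)$. The vertical fiber is $\Phi(x)=\{y\in\mathbb{R}^d:(x,y)\in\Pi\}$ and the horizontal fiber is $\Pi^{y}=\{x\in\mathbb{R}^d:(x,y)\in\Pi\}$. Definitions from descriptive set theory: - A set is analytic if it is the projection of a Borel subset of $\mathbb{N}^{\mathbb{N}}\times X$, where $X$ is the ambient Euclidean space. - A set is coanalytic if its complement is analytic. *)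

theory Defs
  imports "HOL-Analysis.Analysis"
begin

text \<open>Analytic sets: projections of Borel subsets of Baire space times the ambient space.
  Baire space is modelled as nat \<Rightarrow> nat with the product topology (Function_Topology).\<close>
definition analytic :: "'a::topological_space set \<Rightarrow> bool" where
  "analytic S \<longleftrightarrow>
     (\<exists>B \<in> sets (borel :: ((nat \<Rightarrow> nat) \<times> 'a) measure). S = snd ` B)"

definition coanalytic :: "'a::topological_space set \<Rightarrow> bool" where
  "coanalytic S \<longleftrightarrow> analytic (- S)"

definition distZ :: "real ^ 'd \<Rightarrow> real" where
  "distZ z = Max (range (\<lambda>i. \<bar>z $ i - of_int (round (z $ i))\<bar>))"

text \<open>W(psi); only n \<ge> 1 are considered (N = {1,2,...}).\<close>
definition W :: "(nat \<Rightarrow> real) \<Rightarrow> ((real ^ 'd) \<times> (real ^ 'd)) set" where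
  "W \<psi> = {(x, y). infinite {n::nat. n \<ge> 1 \<and> distZ (of_nat n *\<^sub>R x + y) < \<psi> n}}"

text \<open>The class D (for dimension CARD('d)); the value psi 0 is irrelevant.\<close>
definition Dset :: "'d itself \<Rightarrow> (nat \<Rightarrow> real) set" where
  "Dset _ = {\<psi>. (\<forall>n\<ge>1. 0 \<le> \<psi> n) \<and> (\<forall>m n. 1 \<le> m \<longrightarrow> m \<le> n \<longrightarrow> \<psi> n \<le> \<psi> m)
               \<and> \<not> summable (\<lambda>n. \<psi> (Suc n) ^ CARD('d))}"

definition Pi_set :: "((real ^ 'd) \<times> (real ^ 'd)) set" where
  "Pi_set = (\<Inter>\<psi> \<in> Dset TYPE('d). W \<psi>)"

definition Phi :: "real ^ 'd \<Rightarrow> (real ^ 'd) set" where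
  "Phi x = {y. (x, y) \<in> Pi_set}"

definition Pi_hor :: "real ^ 'd \<Rightarrow> (real ^ 'd) set" where
  "Pi_hor y = {x. (x, y) \<in> Pi_set}"

end

theory Submission imports Defs begin

text \<open>The set \<open>\<Pi>\<close> is in fact Borel. For a pair \<open>(x, y)\<close> let
  \<open>a n = \<parallel>n x + y\<parallel>\<close> and, for \<open>N \<ge> 1\<close>, let \<open>m\<^sub>N n = min {a k | N \<le> k \<le> max n N}\<close>.
  Each \<open>m\<^sub>N\<close> is non-increasing and \<open>a n < m\<^sub>N n\<close> fails for all \<open>n \<ge> N\<close>, so \<open>(x, y) \<in> \<Pi>\<close>
  forces \<open>m\<^sub>N \<notin> \<D>\<close>, i.e. \<open>\<Sum> m\<^sub>N(n)\<^sup>d < \<infinity>\<close>. Conversely, if \<open>\<psi> \<in> \<D>\<close> and \<open>a n < \<psi> n\<close> only finitely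
  often, then \<open>\<psi> \<le> m\<^sub>N\<close> eventually for some \<open>N\<close>, contradicting divergence. Hence
  \<open>\<Pi> = {(x, y). \<forall>N \<ge> 1. \<Sum>\<^sub>n m\<^sub>N(n)\<^sup>d < \<infinity>}\<close>, a countable Boolean combination of Borel sets;
  its sections are then Borel, and Borel sets are coanalytic and Lebesgue measurable.\<close>

lemma borel_imp_coanalytic:
  fixes S :: "'a::topological_space set"
  assumes "S \<in> sets borel"
  shows "coanalytic S"
proof -
  have "snd \<in> borel_measurable (borel :: ((nat \<Rightarrow> nat) \<times> 'a) measure)"
    by (intro borel_measurable_continuous_onI continuous_on_snd continuous_on_id)
  moreover have "- S \<in> sets borel"
    using sets.compl_sets[OF assms] by (simp add: Compl_eq_Diff_UNIV)
  ultimately have "snd -` (- S) \<in> sets (borel :: ((nat \<Rightarrow> nat) \<times> 'a) measure)"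
    using measurable_sets[of snd borel borel "- S"] by simp
  moreover have "- S = snd ` (snd -` (- S) :: ((nat \<Rightarrow> nat) \<times> 'a) set)"
    by (force simp: image_iff)
  ultimately show ?thesis
    unfolding coanalytic_def analytic_def by blast
qed

lemma sets_borel_Pair_vimage:
  fixes S :: "('a::topological_space \<times> 'b::topological_space) set"
  assumes "S \<in> sets borel"
  shows "Pair a -` S \<in> sets borel" and "(\<lambda>x. (x, b)) -` S \<in> sets borel"
proof -
  have "Pair a \<in> borel_measurable borel" "(\<lambda>x. (x, b)) \<in> borel_measurable borel"
    by (intro borel_measurable_continuous_onI continuous_intros)+
  from this[THEN measurable_sets, OF assms]
  show "Pair a -` S \<in> sets borel" "(\<lambda>x. (x, b)) -` S \<in> sets borel"
    by simp_all
qed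

lemma summable_iff_bounded_partial_sums:
  fixes f :: "nat \<Rightarrow> real"
  assumes "\<And>n. 0 \<le> f n"
  shows "summable f \<longleftrightarrow> (\<exists>M::nat. \<forall>k. (\<Sum>j\<le>k. f j) \<le> real M)"
proof
  assume "summable f"
  then have "\<forall>k. (\<Sum>j\<le>k. f j) \<le> real (nat \<lceil>suminf f\<rceil>)"
    using assms by (auto intro!: order_trans[OF sum_le_suminf] simp: real_nat_ceiling_ge)
  then show "\<exists>M::nat. \<forall>k. (\<Sum>j\<le>k. f j) \<le> real M" ..
next
  assume "\<exists>M::nat. \<forall>k. (\<Sum>j\<le>k. f j) \<le> real M"
  then show "summable f"
    using assms bounded_imp_summable by blast
qed

lemma pred_summable_nonneg:
  fixes f :: "'a \<Rightarrow> nat \<Rightarrow> real"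
  assumes [measurable]: "\<And>n. (\<lambda>x. f x n) \<in> borel_measurable M"
    and "\<And>x n. 0 \<le> f x n"
  shows "Measurable.pred M (\<lambda>x. summable (f x))"
  using assms(2) by (simp add: summable_iff_bounded_partial_sums) measurable

lemma borel_measurable_distZ [measurable]: "(distZ :: real ^ 'd \<Rightarrow> real) \<in> borel_measurable borel"
proof -
  have "distZ = (\<lambda>z::real ^ 'd. MAX i\<in>UNIV. \<bar>z $ i - of_int \<lfloor>z $ i + 1/2\<rfloor>\<bar>)"
    by (auto simp: distZ_def round_def fun_eq_iff)
  also have "\<dots> \<in> borel_measurable borel"
    by (intro borel_measurable_Max) auto
  finally show ?thesis .
qed

lemma distZ_nonneg: "0 \<le> distZ z"
  unfolding distZ_def by (rule order_trans[OF _ Max_ge[OF _ rangeI]]) auto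

definition running_min :: "(nat \<Rightarrow> real) \<Rightarrow> nat \<Rightarrow> nat \<Rightarrow> real" where
  "running_min a N n = (MIN k\<in>{N..max n N}. a k)"

lemma running_min_le: "N \<le> n \<Longrightarrow> running_min a N n \<le> a n"
  unfolding running_min_def by (rule Min_le) auto

lemma running_min_antimono: "m \<le> n \<Longrightarrow> running_min a N n \<le> running_min a N m"
  unfolding running_min_def by (rule Min_antimono) auto

lemma running_min_nonneg: "(\<And>k. 0 \<le> a k) \<Longrightarrow> 0 \<le> running_min a N n"
  unfolding running_min_def by (subst Min_ge_iff) auto

lemma running_min_greatest:
  assumes "\<And>k. N \<le> k \<Longrightarrow> \<psi> k \<le> a k" and "\<And>k. N \<le> k \<Longrightarrow> k \<le> n \<Longrightarrow> \<psi> n \<le> \<psi> k"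
    and "N \<le> n"
  shows "\<psi> n \<le> running_min a N n"
  unfolding running_min_def using assms(3)
  by (subst Min_ge_iff) (auto intro: order_trans[OF assms(2) assms(1)])

lemma running_min_in_Dset:
  assumes "\<And>k. 0 \<le> a k" and "\<not> summable (\<lambda>n. running_min a N (Suc n) ^ CARD('d))"
  shows "running_min a N \<in> Dset TYPE('d)"
  using assms by (auto simp: Dset_def running_min_nonneg running_min_antimono)

lemma finite_below_running_min: "finite {n. n \<ge> 1 \<and> a n < running_min a N n}"
proof (rule finite_subset)
  show "{n. n \<ge> 1 \<and> a n < running_min a N n} \<subseteq> {..<N}"
  proof
    fix n
    assume "n \<in> {n. n \<ge> 1 \<and> a n < running_min a N n}"
    with running_min_le[of N n a] show "n \<in> {..<N}"
      by (cases "N \<le> n") auto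
  qed
qed simp

lemma not_summable_running_min_if_Dset_below:
  assumes "\<psi> \<in> Dset TYPE('d)" and "N \<ge> 1" and below: "\<And>n. N \<le> n \<Longrightarrow> \<psi> n \<le> a n"
  shows "\<not> summable (\<lambda>n. running_min a N (Suc n) ^ CARD('d))"
proof
  assume summable: "summable (\<lambda>n. running_min a N (Suc n) ^ CARD('d))"
  from \<open>\<psi> \<in> Dset TYPE('d)\<close> have nonneg: "\<And>n. n \<ge> 1 \<Longrightarrow> 0 \<le> \<psi> n"
    and antimono: "\<And>m n. 1 \<le> m \<Longrightarrow> m \<le> n \<Longrightarrow> \<psi> n \<le> \<psi> m"
    and divergent: "\<not> summable (\<lambda>n. \<psi> (Suc n) ^ CARD('d))"
    unfolding Dset_def by blast+
  have le: "\<psi> n \<le> running_min a N n" if "N \<le> n" for n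
    using \<open>N \<ge> 1\<close> that by (intro running_min_greatest below antimono) auto
  have "summable (\<lambda>n. \<psi> (Suc n) ^ CARD('d))"
  proof (rule summable_comparison_test'[OF summable])
    fix n
    assume "N \<le> n"
    with nonneg[of "Suc n"] le[of "Suc n"]
    show "norm (\<psi> (Suc n) ^ CARD('d)) \<le> running_min a N (Suc n) ^ CARD('d)"
      by (simp add: power_mono)
  qed
  with divergent show False ..
qed

lemma often_below_all_Dset_iff:
  fixes a :: "nat \<Rightarrow> real"
  assumes nonneg: "\<And>k. 0 \<le> a k"
  shows "(\<forall>\<psi>\<in>Dset TYPE('d). infinite {n. n \<ge> 1 \<and> a n < \<psi> n})
     \<longleftrightarrow> (\<forall>N\<ge>1. summable (\<lambda>n. running_min a N (Suc n) ^ CARD('d)))"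
proof (intro iffI allI impI ballI)
  fix N :: nat
  assume often: "\<forall>\<psi>\<in>Dset TYPE('d). infinite {n. n \<ge> 1 \<and> a n < \<psi> n}"
  show "summable (\<lambda>n. running_min a N (Suc n) ^ CARD('d))"
  proof (rule ccontr)
    assume "\<not> summable (\<lambda>n. running_min a N (Suc n) ^ CARD('d))"
    then have "running_min a N \<in> Dset TYPE('d)"
      by (rule running_min_in_Dset[OF nonneg])
    with often have "infinite {n. n \<ge> 1 \<and> a n < running_min a N n}" ..
    then show False
      using finite_below_running_min by blast
  qed
next
  fix \<psi>
  assume summable: "\<forall>N\<ge>1. summable (\<lambda>n. running_min a N (Suc n) ^ CARD('d))"
    and \<psi>: "\<psi> \<in> Dset TYPE('d)"
  show "infinite {n. n \<ge> 1 \<and> a n < \<psi> n}"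
  proof
    assume "finite {n. n \<ge> 1 \<and> a n < \<psi> n}"
    then obtain N0 where N0: "{n. n \<ge> 1 \<and> a n < \<psi> n} \<subseteq> {..<N0}"
      using finite_nat_bounded by blast
    have "\<psi> n \<le> a n" if "Suc N0 \<le> n" for n
      using that subsetD[OF N0, of n] by (cases "a n < \<psi> n") auto
    then have "\<not> summable (\<lambda>n. running_min a (Suc N0) (Suc n) ^ CARD('d))"
      by (intro not_summable_running_min_if_Dset_below[OF \<psi>]) auto
    with summable show False
      by simp
  qed
qed

lemma Pi_set_eq:
  "(Pi_set :: ((real ^ 'd) \<times> (real ^ 'd)) set) =
     {(x, y). \<forall>N\<ge>1. summable
        (\<lambda>n. running_min (\<lambda>k. distZ (of_nat k *\<^sub>R x + y)) N (Suc n) ^ CARD('d))}"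
proof -
  have "(x, y) \<in> Pi_set \<longleftrightarrow> (\<forall>N\<ge>1. summable
      (\<lambda>n. running_min (\<lambda>k. distZ (of_nat k *\<^sub>R x + y)) N (Suc n) ^ CARD('d)))"
    for x y :: "real ^ 'd"
  proof -
    have "(x, y) \<in> Pi_set \<longleftrightarrow>
        (\<forall>\<psi>\<in>Dset TYPE('d). infinite {n. n \<ge> 1 \<and> distZ (of_nat n *\<^sub>R x + y) < \<psi> n})"
      by (simp add: Pi_set_def W_def)
    also have "\<dots> \<longleftrightarrow> (\<forall>N\<ge>1. summable
        (\<lambda>n. running_min (\<lambda>k. distZ (of_nat k *\<^sub>R x + y)) N (Suc n) ^ CARD('d)))"
      by (rule often_below_all_Dset_iff) (rule distZ_nonneg)
    finally show ?thesis .
  qed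
  then show ?thesis
    by (intro set_eqI) (simp add: split_paired_all)
qed

lemma Pi_set_borel: "(Pi_set :: ((real ^ 'd) \<times> (real ^ 'd)) set) \<in> sets borel"
proof -
  have [measurable]: "(\<lambda>z::(real ^ 'd) \<times> (real ^ 'd). distZ (of_nat k *\<^sub>R fst z + snd z))
      \<in> borel_measurable borel" for k
    by (rule measurable_compose[OF _ borel_measurable_distZ])
       (intro borel_measurable_continuous_onI continuous_intros)
  have [measurable]: "(\<lambda>z. running_min (\<lambda>k. distZ (of_nat k *\<^sub>R fst z + snd z)) N n
      :: real) \<in> borel_measurable (borel :: ((real ^ 'd) \<times> (real ^ 'd)) measure)" for N n
    unfolding running_min_def by (intro borel_measurable_Min) auto
  have [measurable]: "Measurable.pred borel (\<lambda>z::(real ^ 'd) \<times> (real ^ 'd). summable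
      (\<lambda>n. running_min (\<lambda>k. distZ (of_nat k *\<^sub>R fst z + snd z)) N (Suc n) ^ CARD('d)))" for N
    by (rule pred_summable_nonneg) (simp_all add: distZ_nonneg running_min_nonneg)
  have "Measurable.pred borel (\<lambda>z::(real ^ 'd) \<times> (real ^ 'd). \<forall>N\<ge>1. summable
      (\<lambda>n. running_min (\<lambda>k. distZ (of_nat k *\<^sub>R fst z + snd z)) N (Suc n) ^ CARD('d)))"
    by measurable
  then show ?thesis
    by (simp add: Pi_set_eq Measurable.pred_def case_prod_beta')
qed

theorem lemma9:
  fixes x y :: "real ^ 'd"
  shows "coanalytic (Pi_set :: ((real ^ 'd) \<times> (real ^ 'd)) set)
       \<and> coanalytic (Pi_hor y) \<and> coanalytic (Phi x)
       \<and> (Pi_set :: ((real ^ 'd) \<times> (real ^ 'd)) set) \<in> sets lebesgue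
       \<and> Pi_hor y \<in> sets lebesgue \<and> Phi x \<in> sets lebesgue"
proof -
  have "Pi_hor y = (\<lambda>u. (u, y)) -` Pi_set" and "Phi x = Pair x -` Pi_set"
    by (auto simp: Pi_hor_def Phi_def)
  then have "(Pi_set :: ((real ^ 'd) \<times> (real ^ 'd)) set) \<in> sets borel"
    and "Pi_hor y \<in> sets borel" and "Phi x \<in> sets borel"
    using Pi_set_borel sets_borel_Pair_vimage[OF Pi_set_borel] by simp_all
  then show ?thesis
    by (simp add: borel_imp_coanalytic)
qed

end
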